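(* Let $n\ge 2$. The completely isolated subsemigroups of $\mathcal{I}^{\ast}_n$ are exactly $\mathcal{I}^{\ast}_n$, $\mathcal{S}_n$ and $\mathcal{I}^{\ast}_n\setminus\mathcal{S}_n$.
   Context: Let $X=\{1,\dots,n\}$, $X'=\{1',\dots,n'\}$. $\mathcal{I}^{\ast}_n$ is the set of partitions of $X\cup X'$ all of whose blocks meet both $X$ and $X'$, with product: regard $\alpha$ as a partition of $X\cup X''$ and $\beta$ as a partition of $X''\cup X'$ ($X''$ a third copy of $X$), and let $\alpha\beta$ be the partition of $X\cup X'$ induced by the equivalence on $X\cup X''\cup X'$ generated by the blocks of both. $\mathcal{S}_n$ is its group of units: the elements all of whose blocks are $\{x,\pi(x)'\}$ for a permutation $\pi$ of $X$. A subsemigroup $T$ of a semigroup $S$ is completely isolated if for all $a,b\in S$, $ab\in T$ implies $a\in T$ or $b\in T$. *)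

theory Defs
  imports "HOL-Library.Disjoint_Sets"
begin

text \<open>Points of X \<union> X': (i,0) stands for i \<in> X, (i,1) for i' \<in> X'.
  In the product, level 0 is X, level 1 is X'' and level 2 is X'.\<close>

definition Pts :: "nat \<Rightarrow> (nat \<times> nat) set" where
  "Pts n = {1..n} \<times> {0, 1}"

definition Istar :: "nat \<Rightarrow> (nat \<times> nat) set set set" where
  "Istar n = {P. partition_on (Pts n) P \<and>
      (\<forall>B\<in>P. (\<exists>i. (i, 0) \<in> B) \<and> (\<exists>i. (i, 1) \<in> B))}"

definition blockrel :: "('a set) set \<Rightarrow> ('a \<times> 'a) set" where
  "blockrel P = (\<Union>B\<in>P. B \<times> B)"

definition shift_up :: "(nat \<times> nat) set set \<Rightarrow> (nat \<times> nat) set set" where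
  "shift_up P = (\<lambda>B. (\<lambda>(i, l). (i, l + 1)) ` B) ` P"

definition outer :: "nat \<times> nat \<Rightarrow> nat \<times> nat" where
  "outer = (\<lambda>(i, l). (i, 2 * l))"

text \<open>The product: equivalence on X \<union> X'' \<union> X' generated by the blocks of both,
  restricted to X \<union> X' (levels 0 and 2), with level 2 renamed back to 1.\<close>
definition pmult :: "nat \<Rightarrow> (nat \<times> nat) set set \<Rightarrow> (nat \<times> nat) set set \<Rightarrow> (nat \<times> nat) set set" where
  "pmult n a b =
     (let R = (blockrel a \<union> blockrel (shift_up b))\<^sup>* in
      (\<lambda>x. {y \<in> Pts n. (outer x, outer y) \<in> R}) ` Pts n)"

definition Sn :: "nat \<Rightarrow> (nat \<times> nat) set set set" where
  "Sn n = {P \<in> Istar n. \<exists>\<pi>. bij_betw \<pi> {1..n} {1..n} \<and>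
              P = (\<lambda>x. {(x, 0), (\<pi> x, 1)}) ` {1..n}}"

definition completely_isolated_subsemigroup ::
    "nat \<Rightarrow> (nat \<times> nat) set set set \<Rightarrow> bool" where
  "completely_isolated_subsemigroup n T \<longleftrightarrow>
     T \<noteq> {} \<and> T \<subseteq> Istar n \<and> (\<forall>a\<in>T. \<forall>b\<in>T. pmult n a b \<in> T) \<and>
     (\<forall>a\<in>Istar n. \<forall>b\<in>Istar n. pmult n a b \<in> T \<longrightarrow> a \<in> T \<or> b \<in> T)"

end

theory Submission
  imports Defs "HOL-Combinatorics.Cycles"
begin

text \<open>The units \<open>\<S>\<^sub>n\<close> are the partitions in which no block contains two top points, and a
  product \<open>ab\<close> can only be a unit if \<open>a\<close> is one; hence \<open>\<S>\<^sub>n\<close> and its complement are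
  subsemigroups and all three sets of the theorem are completely isolated.

  Conversely, a proper completely isolated \<open>T\<close> and its complement are two subsemigroups
  partitioning \<open>\<I>\<^sup>*\<^sub>n\<close>. Some power of a unit is the identity, so all units lie in the part
  \<open>X\<close> containing the identity, and the other part \<open>Y\<close> is closed under left multiplication
  by units, which merely relabels top points. In such a subsemigroup every non-unit
  \<open>x\<close> leads to the one-block partition: if a block of \<open>x\<close> has two top points, relabel them
  into bottom points \<open>k, l\<close> of two different blocks of \<open>x\<close>; then \<open>x (\<pi> x)\<close> has fewer blocks
  and is again a non-unit. As \<open>Y\<close> contains a non-unit, the one-block partition is in \<open>Y\<close>,
  so \<open>X\<close> contains no non-unit and \<open>X = \<S>\<^sub>n\<close>.\<close>

lemma mem_Pts_iff [simp]: "(i, l) \<in> Pts n \<longleftrightarrow> i \<in> {1..n} \<and> (l = 0 \<or> l = 1)"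
  by (auto simp: Pts_def)

lemma finite_Pts [simp]: "finite (Pts n)"
  by (simp add: Pts_def)

lemma outer_eq [simp]: "outer (i, l) = (i, 2 * l)"
  by (simp add: outer_def)

lemma blockrel_eq: "blockrel P = {(x, y). \<exists>B\<in>P. x \<in> B \<and> y \<in> B}"
  by (auto simp: blockrel_def)

lemma trans_blockrel: "disjoint P \<Longrightarrow> trans (blockrel P)"
  unfolding blockrel_def trans_def disjoint_def by blast

lemma sym_blockrel: "sym (blockrel P)"
  unfolding blockrel_def sym_def by blast

definition block_of :: "'a set set \<Rightarrow> 'a \<Rightarrow> 'a set" where
  "block_of P x = (THE B. B \<in> P \<and> x \<in> B)"

lemma block_of_eq:
  assumes "partition_on A P" "B \<in> P" "x \<in> B"
  shows "block_of P x = B"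
  unfolding block_of_def
proof (rule the_equality)
  show "B \<in> P \<and> x \<in> B" using assms(2,3) ..
  show "B' = B" if "B' \<in> P \<and> x \<in> B'" for B'
    using that assms(2,3) disjointD[OF partition_onD2[OF assms(1)]] by blast
qed

lemma block_of:
  assumes "partition_on A P" "x \<in> A"
  shows "block_of P x \<in> P" "x \<in> block_of P x"
proof -
  obtain B where "B \<in> P" "x \<in> B" using assms partition_onD1[OF assms(1)] by blast
  with block_of_eq[OF assms(1)] show "block_of P x \<in> P" "x \<in> block_of P x" by simp_all
qed

lemma quotient_conjugate:
  assumes f: "\<And>x. x \<in> A \<Longrightarrow> f x \<in> A" and g: "\<And>x. x \<in> A \<Longrightarrow> g x \<in> A"
    and fg: "\<And>x. x \<in> A \<Longrightarrow> f (g x) = x" and gf: "\<And>x. x \<in> A \<Longrightarrow> g (f x) = x"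
    and r: "r \<subseteq> A \<times> A"
  shows "A // {(x, y). x \<in> A \<and> y \<in> A \<and> (f x, f y) \<in> r} = (`) g ` (A // r)"
proof -
  let ?R = "{(x, y). x \<in> A \<and> y \<in> A \<and> (f x, f y) \<in> r}"
  have class_eq: "?R `` {x} = g ` (r `` {f x})" if x: "x \<in> A" for x
  proof (intro set_eqI iffI)
    fix y assume "y \<in> ?R `` {x}"
    then have "y \<in> A" "f y \<in> r `` {f x}" by auto
    then show "y \<in> g ` (r `` {f x})" using gf by (metis imageI)
  next
    fix y assume "y \<in> g ` (r `` {f x})"
    then obtain z where z: "y = g z" "(f x, z) \<in> r" by blast
    then have "z \<in> A" using r by blast
    with x z show "y \<in> ?R `` {x}" using g fg by simp
  qed
  have "f ` A = A"
    using f g fg by (metis image_subset_iff subsetI subset_antisym imageI)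
  have "A // ?R = (\<lambda>x. g ` (r `` {f x})) ` A"
    unfolding quotient_def using class_eq by (simp add: UNION_singleton_eq_range)
  also have "\<dots> = (\<lambda>z. g ` (r `` {z})) ` f ` A"
    by (simp add: image_image)
  also have "\<dots> = (`) g ` (A // r)"
    unfolding \<open>f ` A = A\<close> quotient_def by (simp add: UNION_singleton_eq_range image_image)
  finally show ?thesis .
qed

lemma permutes_map_two_points:
  assumes "k \<in> S" "l \<in> S" "p \<in> S" "q \<in> S" "k \<noteq> l" "p \<noteq> q"
  obtains \<pi> where "\<pi> permutes S" "\<pi> k = p" "\<pi> l = q"
proof -
  define l' where "l' = transpose k p l"
  have "l' \<in> S" "l' \<noteq> p" using assms unfolding l'_def transpose_def by auto
  let ?\<pi> = "transpose l' q \<circ> transpose k p"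
  have "?\<pi> permutes S" using assms \<open>l' \<in> S\<close> by (intro permutes_compose permutes_swap_id)
  moreover have "?\<pi> k = p" using \<open>l' \<noteq> p\<close> assms(6) by (simp add: transpose_def)
  moreover have "?\<pi> l = q" unfolding l'_def by (simp add: transpose_def)
  ultimately show ?thesis by (rule that)
qed

lemma Istar_partition: "P \<in> Istar n \<Longrightarrow> partition_on (Pts n) P"
  by (simp add: Istar_def)

lemma Istar_block_subset: "P \<in> Istar n \<Longrightarrow> B \<in> P \<Longrightarrow> B \<subseteq> Pts n"
  by (auto simp: Istar_def partition_on_def)

lemma Istar_block_unique:
  "P \<in> Istar n \<Longrightarrow> B \<in> P \<Longrightarrow> B' \<in> P \<Longrightarrow> x \<in> B \<Longrightarrow> x \<in> B' \<Longrightarrow> B = B'"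
  unfolding Istar_def partition_on_def disjoint_def by blast

lemma Istar_block_meets_level:
  assumes "P \<in> Istar n" "B \<in> P" "l \<in> {0, 1}"
  obtains i where "i \<in> {1..n}" "(i, l) \<in> B"
proof -
  obtain i where "(i, l) \<in> B" using assms unfolding Istar_def by blast
  moreover from this have "i \<in> {1..n}" using Istar_block_subset[OF assms(1,2)] assms(3) by auto
  ultimately show ?thesis using that by blast
qed

lemma Istar_partner:
  assumes "P \<in> Istar n" "x \<in> Pts n" "l \<in> {0, 1}"
  obtains i where "i \<in> {1..n}" "(x, (i, l)) \<in> blockrel P"
proof -
  obtain B where "B \<in> P" "x \<in> B"
    using assms(1,2) partition_onD1[OF Istar_partition[OF assms(1)]] by blast
  with Istar_block_meets_level[OF assms(1) _ assms(3)] that show ?thesis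
    unfolding blockrel_def by blast
qed

lemma Istar_blockrel_quotient: "P \<in> Istar n \<Longrightarrow> Pts n // blockrel P = P"
  unfolding blockrel_eq by (rule partition_on_eq_quotient[OF Istar_partition])

lemma finite_Istar: "P \<in> Istar n \<Longrightarrow> finite P"
  by (rule finite_elements[OF finite_Pts Istar_partition])

definition lift_pt :: "nat \<times> nat \<Rightarrow> nat \<times> nat" where
  "lift_pt = (\<lambda>(i, l). (i, l + 1))"

lemma lift_pt_eq [simp]: "lift_pt (i, l) = (i, l + 1)"
  by (simp add: lift_pt_def)

lemma inj_lift_pt: "inj lift_pt"
  by (rule injI) (auto simp: lift_pt_def split: prod.splits)

lemma shift_up_eq: "shift_up b = (`) lift_pt ` b"
  by (simp add: shift_up_def lift_pt_def)

lemma blockrel_shift_up_lift [simp]: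
  "(lift_pt u, lift_pt v) \<in> blockrel (shift_up b) \<longleftrightarrow> (u, v) \<in> blockrel b"
  using inj_lift_pt unfolding shift_up_eq blockrel_def by (auto dest: injD)

lemma blockrel_shift_upE:
  assumes "(u, v) \<in> blockrel (shift_up b)"
  obtains u' v' where "u = lift_pt u'" "v = lift_pt v'" "(u', v') \<in> blockrel b"
  using assms unfolding shift_up_eq blockrel_def by blast

definition glue ::
    "(nat \<times> nat) set set \<Rightarrow> (nat \<times> nat) set set \<Rightarrow> ((nat \<times> nat) \<times> (nat \<times> nat)) set" where
  "glue a b = (blockrel a \<union> blockrel (shift_up b))\<^sup>*"

definition pmult_equiv :: "nat \<Rightarrow> (nat \<times> nat) set set \<Rightarrow> (nat \<times> nat) set set \<Rightarrow>
    ((nat \<times> nat) \<times> (nat \<times> nat)) set" where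
  "pmult_equiv n a b = {(x, y). x \<in> Pts n \<and> y \<in> Pts n \<and> (outer x, outer y) \<in> glue a b}"

lemma glue_left: "(u, v) \<in> blockrel a \<Longrightarrow> (u, v) \<in> glue a b"
  unfolding glue_def by (rule r_into_rtrancl) (rule UnI1)

lemma glue_right: "(u, v) \<in> blockrel b \<Longrightarrow> (lift_pt u, lift_pt v) \<in> glue a b"
  unfolding glue_def by (rule r_into_rtrancl) simp

lemma glue_refl [simp]: "(u, u) \<in> glue a b"
  unfolding glue_def by (rule rtrancl_refl)

lemma glue_trans: "(u, v) \<in> glue a b \<Longrightarrow> (v, w) \<in> glue a b \<Longrightarrow> (u, w) \<in> glue a b"
  unfolding glue_def by (rule rtrancl_trans)

lemma glue_sym: "(u, v) \<in> glue a b \<Longrightarrow> (v, u) \<in> glue a b"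
  unfolding glue_def by (rule symD[OF sym_rtrancl[OF sym_Un[OF sym_blockrel sym_blockrel]]])

lemma equiv_pmult_equiv: "equiv (Pts n) (pmult_equiv n a b)"
proof (rule equivI)
  show "refl_on (Pts n) (pmult_equiv n a b)"
    by (rule refl_onI) (auto simp: pmult_equiv_def)
  show "sym (pmult_equiv n a b)"
    by (rule symI) (auto simp: pmult_equiv_def intro: glue_sym)
  show "trans (pmult_equiv n a b)"
    by (rule transI) (auto simp: pmult_equiv_def elim: glue_trans)
qed (auto simp: pmult_equiv_def)

lemma pmult_eq_quotient: "pmult n a b = Pts n // pmult_equiv n a b"
  unfolding pmult_def pmult_equiv_def glue_def quotient_def by auto

lemma pmult_Istar:
  assumes a: "a \<in> Istar n" and b: "b \<in> Istar n"
  shows "pmult n a b \<in> Istar n"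
proof -
  let ?R = "pmult_equiv n a b"
  have down: "\<exists>j. ((i, 0), (j, 1)) \<in> ?R" if i: "(i, 0) \<in> Pts n" for i
  proof -
    obtain k where k: "k \<in> {1..n}" "((i, 0), (k, 1)) \<in> blockrel a"
      using Istar_partner[OF a i, of 1] by auto
    obtain j where j: "j \<in> {1..n}" "((k, 0), (j, 1)) \<in> blockrel b"
      using Istar_partner[OF b, of "(k, 0)" 1] k(1) by auto
    have "((i, 0), (k, 1)) \<in> glue a b" using glue_left[OF k(2)] .
    moreover have "((k, 1), (j, 2)) \<in> glue a b"
      using glue_right[OF j(2)] by (simp add: numeral_2_eq_2)
    ultimately have "(outer (i, 0), outer (j, 1)) \<in> glue a b" using glue_trans by simp
    then show ?thesis using i j(1) unfolding pmult_equiv_def by auto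
  qed
  have up: "\<exists>j. ((i, 1), (j, 0)) \<in> ?R" if i: "(i, 1) \<in> Pts n" for i
  proof -
    obtain k where k: "k \<in> {1..n}" "((i, 1), (k, 0)) \<in> blockrel b"
      using Istar_partner[OF b i, of 0] by auto
    obtain j where j: "j \<in> {1..n}" "((k, 1), (j, 0)) \<in> blockrel a"
      using Istar_partner[OF a, of "(k, 1)" 0] k(1) by auto
    have "((i, 2), (k, 1)) \<in> glue a b" using glue_right[OF k(2)] by (simp add: numeral_2_eq_2)
    moreover have "((k, 1), (j, 0)) \<in> glue a b" using glue_left[OF j(2)] .
    ultimately have "(outer (i, 1), outer (j, 0)) \<in> glue a b" using glue_trans by simp
    then show ?thesis using i j(1) unfolding pmult_equiv_def by auto
  qed
  have "(\<exists>i. (i, 0) \<in> C) \<and> (\<exists>i. (i, 1) \<in> C)" if C: "C \<in> pmult n a b" for C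
  proof -
    obtain x where x: "x \<in> Pts n" "C = ?R `` {x}"
      using C unfolding pmult_eq_quotient by (rule quotientE)
    obtain i l where il: "x = (i, l)" "l = 0 \<or> l = 1" using x(1) by (cases x) auto
    have "x \<in> C" using x equiv_class_self[OF equiv_pmult_equiv] by blast
    from il(2) show ?thesis
    proof
      assume "l = 0"
      then obtain j where "(x, (j, 1)) \<in> ?R" using down[of i] x(1) il(1) by blast
      then have "(j, 1) \<in> C" using x(2) by simp
      with \<open>x \<in> C\<close> show ?thesis unfolding il(1) \<open>l = 0\<close> by blast
    next
      assume "l = 1"
      then obtain j where "(x, (j, 0)) \<in> ?R" using up[of i] x(1) il(1) by blast
      then have "(j, 0) \<in> C" using x(2) by simp
      with \<open>x \<in> C\<close> show ?thesis unfolding il(1) \<open>l = 1\<close> by blast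
    qed
  qed
  moreover have "partition_on (Pts n) (pmult n a b)"
    unfolding pmult_eq_quotient by (rule partition_on_quotient[OF equiv_pmult_equiv])
  ultimately show ?thesis unfolding Istar_def by blast
qed

lemma Istar_blocks_by_level:
  assumes P: "P \<in> Istar n" and l: "l \<in> {0, 1}"
  shows "(\<lambda>i. block_of P (i, l)) ` {1..n} = P"
proof
  show "(\<lambda>i. block_of P (i, l)) ` {1..n} \<subseteq> P"
    using block_of(1)[OF Istar_partition[OF P]] l by auto
  show "P \<subseteq> (\<lambda>i. block_of P (i, l)) ` {1..n}"
  proof
    fix B assume B: "B \<in> P"
    then obtain i where "i \<in> {1..n}" "(i, l) \<in> B" using Istar_block_meets_level[OF P B l] by blast
    with block_of_eq[OF Istar_partition[OF P] B] show "B \<in> (\<lambda>i. block_of P (i, l)) ` {1..n}"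
      by force
  qed
qed

definition perm_partition :: "nat \<Rightarrow> (nat \<Rightarrow> nat) \<Rightarrow> (nat \<times> nat) set set" where
  "perm_partition n \<pi> = (\<lambda>i. {(i, 0), (\<pi> i, 1)}) ` {1..n}"

lemma perm_partition_Istar:
  assumes \<pi>: "bij_betw \<pi> {1..n} {1..n}"
  shows "perm_partition n \<pi> \<in> Istar n"
proof -
  have "\<Union>(perm_partition n \<pi>) = Pts n"
  proof
    show "\<Union>(perm_partition n \<pi>) \<subseteq> Pts n"
    proof
      fix z assume "z \<in> \<Union>(perm_partition n \<pi>)"
      then obtain i where i: "i \<in> {1..n}" and "z = (i, 0) \<or> z = (\<pi> i, 1)"
        unfolding perm_partition_def by blast
      with bij_betw_apply[OF \<pi> i] show "z \<in> Pts n" by auto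
    qed
    show "Pts n \<subseteq> \<Union>(perm_partition n \<pi>)"
    proof
      fix z assume "z \<in> Pts n"
      then obtain i l where z: "z = (i, l)" and i: "i \<in> {1..n}" and "l = 0 \<or> l = 1"
        by (cases z) auto
      then consider "z = (i, 0)" | "z = (i, 1)" by blast
      then show "z \<in> \<Union>(perm_partition n \<pi>)"
      proof cases
        case 1
        with i show ?thesis unfolding perm_partition_def by blast
      next
        case 2
        have "i \<in> \<pi> ` {1..n}" using bij_betw_imp_surj_on[OF \<pi>] i by simp
        then obtain j where "j \<in> {1..n}" "\<pi> j = i" by blast
        with 2 show ?thesis unfolding perm_partition_def by blast
      qed
    qed
  qed
  moreover have "disjoint (perm_partition n \<pi>)"
  proof (rule disjointI)
    fix A B assume "A \<in> perm_partition n \<pi>" "B \<in> perm_partition n \<pi>" "A \<noteq> B"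
    obtain i where i: "i \<in> {1..n}" and A: "A = {(i, 0), (\<pi> i, 1)}"
      using \<open>A \<in> _\<close> unfolding perm_partition_def by blast
    obtain j where j: "j \<in> {1..n}" and B: "B = {(j, 0), (\<pi> j, 1)}"
      using \<open>B \<in> _\<close> unfolding perm_partition_def by blast
    have "i \<noteq> j" using \<open>A \<noteq> B\<close> unfolding A B by blast
    then have "\<pi> i \<noteq> \<pi> j" using bij_betw_imp_inj_on[OF \<pi>] i j by (auto dest: inj_onD)
    with \<open>i \<noteq> j\<close> show "A \<inter> B = {}" unfolding A B by auto
  qed
  moreover have "{} \<notin> perm_partition n \<pi>"
    by (auto simp: perm_partition_def)
  ultimately have "partition_on (Pts n) (perm_partition n \<pi>)"
    unfolding partition_on_def by blast
  moreover have "\<forall>B\<in>perm_partition n \<pi>. (\<exists>i. (i, 0) \<in> B) \<and> (\<exists>i. (i, 1) \<in> B)"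
    unfolding perm_partition_def by blast
  ultimately show ?thesis unfolding Istar_def by blast
qed

lemma Sn_eq: "Sn n = perm_partition n ` {\<pi>. \<pi> permutes {1..n}}"
proof
  show "perm_partition n ` {\<pi>. \<pi> permutes {1..n}} \<subseteq> Sn n"
    using perm_partition_Istar permutes_imp_bij unfolding Sn_def perm_partition_def by blast
  show "Sn n \<subseteq> perm_partition n ` {\<pi>. \<pi> permutes {1..n}}"
  proof
    fix P assume "P \<in> Sn n"
    then obtain \<pi> where \<pi>: "bij_betw \<pi> {1..n} {1..n}" "P = perm_partition n \<pi>"
      unfolding Sn_def perm_partition_def by blast
    define \<sigma> where "\<sigma> i = (if i \<in> {1..n} then \<pi> i else i)" for i
    have "bij_betw \<sigma> {1..n} {1..n}"
      using \<pi>(1) by (rule bij_betw_cong[THEN iffD1, rotated]) (simp add: \<sigma>_def)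
    then have "\<sigma> permutes {1..n}" by (rule bij_imp_permutes) (auto simp: \<sigma>_def)
    moreover have "perm_partition n \<sigma> = P"
      unfolding \<pi>(2) perm_partition_def \<sigma>_def by auto
    ultimately show "P \<in> perm_partition n ` {\<pi>. \<pi> permutes {1..n}}" by blast
  qed
qed

definition top_injective :: "(nat \<times> nat) set set \<Rightarrow> bool" where
  "top_injective P \<longleftrightarrow> (\<forall>B\<in>P. \<forall>i j. (i, 0) \<in> B \<longrightarrow> (j, 0) \<in> B \<longrightarrow> i = j)"

lemma Sn_top_injective: "P \<in> Sn n \<Longrightarrow> top_injective P"
  unfolding Sn_def top_injective_def by auto

lemma inj_on_block_of_top:
  assumes P: "P \<in> Istar n" and inj: "top_injective P"
  shows "inj_on (\<lambda>i. block_of P (i, 0)) {1..n}"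
proof (rule inj_onI)
  fix i j assume "i \<in> {1..n}" "j \<in> {1..n}" "block_of P (i, 0) = block_of P (j, 0)"
  then have "block_of P (i, 0) \<in> P" "(i, 0) \<in> block_of P (i, 0)" "(j, 0) \<in> block_of P (i, 0)"
    using block_of[OF Istar_partition[OF P]] by auto
  with inj show "i = j" unfolding top_injective_def by blast
qed

lemma Istar_block_eq_pair:
  assumes P: "P \<in> Istar n"
    and inj0: "inj_on (\<lambda>i. block_of P (i, 0)) {1..n}"
    and inj1: "inj_on (\<lambda>j. block_of P (j, 1)) {1..n}"
    and i: "i \<in> {1..n}" and j: "j \<in> {1..n}" and ij: "block_of P (j, 1) = block_of P (i, 0)"
  shows "block_of P (i, 0) = {(i, 0), (j, 1)}"
proof -
  have part: "partition_on (Pts n) P" using Istar_partition[OF P] .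
  let ?B = "block_of P (i, 0)"
  have B: "?B \<in> P" using block_of(1)[OF part] i by simp
  have "(i, 0) \<in> ?B" "(j, 1) \<in> ?B"
    using block_of(2)[OF part] i j ij by (simp, metis mem_Pts_iff)
  moreover have "z \<in> {(i, 0), (j, 1)}" if z: "z \<in> ?B" for z
  proof -
    obtain k l where kl: "z = (k, l)" "k \<in> {1..n}" "l = 0 \<or> l = 1"
      using z Istar_block_subset[OF P B] by (cases z) auto
    then have kB: "block_of P (k, l) = ?B" using block_of_eq[OF part B] z by simp
    from kl(3) show ?thesis
    proof
      assume "l = 0"
      with kB have "k = i" using inj_onD[OF inj0 _ kl(2) i] by simp
      with kl(1) \<open>l = 0\<close> show ?thesis by simp
    next
      assume "l = 1"
      with kB ij have "k = j" using inj_onD[OF inj1 _ kl(2) j] by simp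
      with kl(1) \<open>l = 1\<close> show ?thesis by simp
    qed
  qed
  ultimately show ?thesis by blast
qed

lemma top_injective_Sn:
  assumes P: "P \<in> Istar n" and inj: "top_injective P"
  shows "P \<in> Sn n"
proof -
  define f where "f i = block_of P (i, 0)" for i
  define g where "g j = block_of P (j, 1)" for j
  have f_onto: "f ` {1..n} = P" and g_onto: "g ` {1..n} = P"
    using Istar_blocks_by_level[OF P] unfolding f_def g_def by simp_all
  have f_inj: "inj_on f {1..n}" unfolding f_def using inj_on_block_of_top[OF P inj] .
  then have "card P = n" using f_onto card_image by fastforce
  then have g_inj: "inj_on g {1..n}" using g_onto by (simp add: eq_card_imp_inj_on)
  \<comment> \<open>\<open>\<pi> i\<close> is the bottom point in the block of the top point \<open>i\<close>.\<close>
  define \<pi> where "\<pi> = the_inv_into {1..n} g \<circ> f"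
  have \<pi>_bij: "bij_betw \<pi> {1..n} {1..n}"
    unfolding \<pi>_def using f_inj f_onto g_inj g_onto
    by (intro bij_betw_trans bij_betw_the_inv_into) (auto simp: bij_betw_def)
  have "f i = {(i, 0), (\<pi> i, 1)}" if i: "i \<in> {1..n}" for i
  proof -
    have "g (\<pi> i) = f i"
      unfolding \<pi>_def using f_the_inv_into_f[OF g_inj] i f_onto g_onto by auto
    with Istar_block_eq_pair[OF P _ _ i bij_betw_apply[OF \<pi>_bij i]] f_inj g_inj
    show ?thesis unfolding f_def g_def by simp
  qed
  then have "P = perm_partition n \<pi>"
    unfolding f_onto[symmetric] perm_partition_def by (rule image_cong[OF refl])
  with P \<pi>_bij show ?thesis unfolding Sn_def perm_partition_def by blast
qed

lemma Sn_Istar: "Sn n \<subseteq> Istar n"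
  unfolding Sn_def by blast

lemma pmult_Sn_left:
  assumes a: "a \<in> Istar n" and ab: "pmult n a b \<in> Sn n"
  shows "a \<in> Sn n"
proof (rule ccontr)
  assume "a \<notin> Sn n"
  then obtain A i j where A: "A \<in> a" "(i, 0) \<in> A" "(j, 0) \<in> A" "i \<noteq> j"
    using top_injective_Sn[OF a] unfolding top_injective_def by blast
  then have ij: "(i, 0) \<in> Pts n" "(j, 0) \<in> Pts n" using Istar_block_subset[OF a] by blast+
  have "((i, 0), (j, 0)) \<in> pmult_equiv n a b"
    using ij glue_left[of "(i, 0)" "(j, 0)"] A unfolding pmult_equiv_def blockrel_def by auto
  then have "(i, 0) \<in> pmult_equiv n a b `` {(i, 0)}" "(j, 0) \<in> pmult_equiv n a b `` {(i, 0)}"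
    using equiv_class_self[OF equiv_pmult_equiv ij(1)] by auto
  moreover have "pmult_equiv n a b `` {(i, 0)} \<in> pmult n a b"
    unfolding pmult_eq_quotient using ij(1) by (rule quotientI)
  ultimately have "\<not> top_injective (pmult n a b)"
    using A(4) unfolding top_injective_def by blast
  with Sn_top_injective[OF ab] show False by blast
qed

definition perm_top :: "(nat \<Rightarrow> nat) \<Rightarrow> nat \<times> nat \<Rightarrow> nat \<times> nat" where
  "perm_top \<pi> = (\<lambda>(i, l). if l = 0 then (\<pi> i, l) else (i, l))"

definition map_top :: "(nat \<Rightarrow> nat) \<Rightarrow> (nat \<times> nat) set set \<Rightarrow> (nat \<times> nat) set set" where
  "map_top \<pi> P = (`) (perm_top \<pi>) ` P"

lemma perm_top_eq [simp]: "perm_top \<pi> (i, l) = (if l = 0 then (\<pi> i, l) else (i, l))"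
  by (simp add: perm_top_def)

lemma perm_top_Pts: "\<pi> permutes {1..n} \<Longrightarrow> x \<in> Pts n \<Longrightarrow> perm_top \<pi> x \<in> Pts n"
  by (cases x) (use permutes_in_image[of \<pi> "{1..n}"] in auto)

lemma perm_top_inv: "\<pi> permutes S \<Longrightarrow> perm_top \<pi> (perm_top (inv \<pi>) x) = x"
  by (cases x) (simp add: permutes_inverses)

lemma perm_top_inv': "\<pi> permutes S \<Longrightarrow> perm_top (inv \<pi>) (perm_top \<pi> x) = x"
  by (cases x) (simp add: permutes_inverses)

lemma map_top_inv: "\<pi> permutes S \<Longrightarrow> map_top \<pi> (map_top (inv \<pi>) P) = P"
  unfolding map_top_def image_image by (simp add: image_image perm_top_inv)

lemma disjoint_shift_up: "disjoint b \<Longrightarrow> disjoint (shift_up b)"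
  unfolding shift_up_eq using inj_lift_pt by (intro disjoint_image) (auto intro: inj_on_subset)

definition fold_top :: "(nat \<Rightarrow> nat) \<Rightarrow> nat \<times> nat \<Rightarrow> nat \<times> nat" where
  "fold_top \<pi> u = (if snd u = 0 then (\<pi> (fst u), 1) else u)"

lemma fold_top_outer: "x \<in> Pts n \<Longrightarrow> fold_top \<pi> (outer x) = lift_pt (perm_top \<pi> x)"
  by (cases x) (auto simp: fold_top_def)

text \<open>Each block of \<^term>\<open>perm_partition n \<pi>\<close> joins a top point to its partner in the middle
  row; folding the top row onto the middle row along these blocks therefore sends every
  generating edge of the product into the shifted copy of \<open>b\<close>, which is transitive.\<close>

lemma glue_perm_partition_fold_top:
  assumes b: "disjoint b" and uv: "(u, v) \<in> glue (perm_partition n \<pi>) b"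
  shows "(fold_top \<pi> u, fold_top \<pi> v) \<in> (blockrel (shift_up b))\<^sup>="
  using uv unfolding glue_def
proof (induction rule: rtrancl_induct)
  case base
  show ?case by simp
next
  case (step v w)
  from step.hyps(2) have "(fold_top \<pi> v, fold_top \<pi> w) \<in> (blockrel (shift_up b))\<^sup>="
  proof
    assume "(v, w) \<in> blockrel (perm_partition n \<pi>)"
    then obtain i where "v \<in> {(i, 0), (\<pi> i, 1)}" "w \<in> {(i, 0), (\<pi> i, 1)}"
      unfolding blockrel_def perm_partition_def by blast
    then show ?thesis by (auto simp: fold_top_def)
  next
    assume vw: "(v, w) \<in> blockrel (shift_up b)"
    then obtain v' w' where "v = lift_pt v'" "w = lift_pt w'" by (rule blockrel_shift_upE)
    then have "fold_top \<pi> v = v" "fold_top \<pi> w = w"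
      by (auto simp: fold_top_def lift_pt_def split: prod.splits)
    with vw show ?thesis by simp
  qed
  moreover have "trans ((blockrel (shift_up b))\<^sup>=)"
    using b by (intro trans_on_reflcl trans_blockrel disjoint_shift_up)
  ultimately show ?case using step.IH by (blast dest: transD)
qed

lemma glue_perm_partition_outer:
  assumes x: "x \<in> Pts n"
  shows "(outer x, lift_pt (perm_top \<pi> x)) \<in> glue (perm_partition n \<pi>) b"
proof (cases x)
  case (Pair i l)
  show ?thesis
  proof (cases "l = 0")
    case True
    with x Pair have "{(i, 0), (\<pi> i, 1)} \<in> perm_partition n \<pi>" unfolding perm_partition_def by auto
    then have "((i, 0), (\<pi> i, 1)) \<in> glue (perm_partition n \<pi>) b"
      by (intro glue_left) (auto simp: blockrel_def)
    with Pair True show ?thesis by simp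
  next
    case False
    with x Pair have "l = 1" by simp
    with Pair show ?thesis by (simp add: numeral_2_eq_2)
  qed
qed

lemma pmult_equiv_perm_partition:
  assumes \<pi>: "\<pi> permutes {1..n}" and b: "b \<in> Istar n"
  shows "pmult_equiv n (perm_partition n \<pi>) b =
           {(x, y). x \<in> Pts n \<and> y \<in> Pts n \<and> (perm_top \<pi> x, perm_top \<pi> y) \<in> blockrel b}"
proof -
  let ?a = "perm_partition n \<pi>"
  have sound: "(perm_top \<pi> x, perm_top \<pi> y) \<in> blockrel b" if "(x, y) \<in> pmult_equiv n ?a b" for x y
  proof -
    from that have xy: "x \<in> Pts n" "y \<in> Pts n" and "(outer x, outer y) \<in> glue ?a b"
      unfolding pmult_equiv_def by auto
    then have "(fold_top \<pi> (outer x), fold_top \<pi> (outer y)) \<in> (blockrel (shift_up b))\<^sup>="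
      using partition_onD2[OF Istar_partition[OF b]] by (intro glue_perm_partition_fold_top)
    then have "perm_top \<pi> x = perm_top \<pi> y \<or> (perm_top \<pi> x, perm_top \<pi> y) \<in> blockrel b"
      unfolding fold_top_outer[OF xy(1)] fold_top_outer[OF xy(2)]
      by (auto dest: injD[OF inj_lift_pt])
    moreover have "(perm_top \<pi> x, perm_top \<pi> x) \<in> blockrel b"
      using perm_top_Pts[OF \<pi> xy(1)] partition_onD1[OF Istar_partition[OF b]]
      unfolding blockrel_def by blast
    ultimately show ?thesis by auto
  qed
  have complete: "(x, y) \<in> pmult_equiv n ?a b"
    if xy: "x \<in> Pts n" "y \<in> Pts n" and "(perm_top \<pi> x, perm_top \<pi> y) \<in> blockrel b" for x y
  proof -
    from that(3) have "(lift_pt (perm_top \<pi> x), lift_pt (perm_top \<pi> y)) \<in> glue ?a b"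
      by (rule glue_right)
    then have "(outer x, outer y) \<in> glue ?a b"
      using glue_perm_partition_outer[OF xy(1)] glue_sym[OF glue_perm_partition_outer[OF xy(2)]]
      by (blast intro: glue_trans)
    with xy show ?thesis unfolding pmult_equiv_def by simp
  qed
  have "pmult_equiv n ?a b \<subseteq> Pts n \<times> Pts n"
    unfolding pmult_equiv_def by auto
  with sound complete show ?thesis by auto
qed

lemma pmult_perm_partition:
  assumes \<pi>: "\<pi> permutes {1..n}" and b: "b \<in> Istar n"
  shows "pmult n (perm_partition n \<pi>) b = map_top (inv \<pi>) b"
proof -
  have "blockrel b \<subseteq> Pts n \<times> Pts n"
    using Istar_block_subset[OF b] unfolding blockrel_def by blast
  then have "Pts n // pmult_equiv n (perm_partition n \<pi>) b =
      (`) (perm_top (inv \<pi>)) ` (Pts n // blockrel b)"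
    unfolding pmult_equiv_perm_partition[OF assms]
    using perm_top_Pts[OF \<pi>] perm_top_Pts[OF permutes_inv[OF \<pi>]]
      perm_top_inv[OF \<pi>] perm_top_inv'[OF \<pi>]
    by (intro quotient_conjugate)
  then show ?thesis
    unfolding pmult_eq_quotient Istar_blockrel_quotient[OF b] map_top_def .
qed

lemma map_top_perm_partition:
  assumes \<pi>: "\<pi> permutes {1..n}"
  shows "map_top (inv \<pi>) (perm_partition n \<sigma>) = perm_partition n (\<sigma> \<circ> \<pi>)"
proof -
  have "map_top (inv \<pi>) (perm_partition n \<sigma>) = (\<lambda>i. {(inv \<pi> i, 0), (\<sigma> i, 1)}) ` {1..n}"
    unfolding map_top_def perm_partition_def image_image by simp
  also have "\<dots> = (\<lambda>i. {(inv \<pi> i, 0), (\<sigma> i, 1)}) ` \<pi> ` {1..n}"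
    by (simp only: permutes_image[OF \<pi>])
  also have "\<dots> = perm_partition n (\<sigma> \<circ> \<pi>)"
    unfolding perm_partition_def image_image by (simp add: permutes_inverses(2)[OF \<pi>])
  finally show ?thesis .
qed

lemma pmult_perm_partitions:
  assumes "\<pi> permutes {1..n}" "\<sigma> permutes {1..n}"
  shows "pmult n (perm_partition n \<pi>) (perm_partition n \<sigma>) = perm_partition n (\<sigma> \<circ> \<pi>)"
  using assms perm_partition_Istar[OF permutes_imp_bij[OF assms(2)]]
  by (simp add: pmult_perm_partition map_top_perm_partition)

definition pmult_closed :: "nat \<Rightarrow> (nat \<times> nat) set set set \<Rightarrow> bool" where
  "pmult_closed n X \<longleftrightarrow> X \<subseteq> Istar n \<and> (\<forall>a\<in>X. \<forall>b\<in>X. pmult n a b \<in> X)"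

lemma completely_isolated_iff:
  "completely_isolated_subsemigroup n T \<longleftrightarrow>
     T \<noteq> {} \<and> pmult_closed n T \<and> pmult_closed n (Istar n - T)"
  unfolding completely_isolated_subsemigroup_def pmult_closed_def
  using pmult_Istar by blast

lemma pmult_closed_Istar: "pmult_closed n (Istar n)"
  unfolding pmult_closed_def using pmult_Istar by blast

lemma pmult_closed_Sn: "pmult_closed n (Sn n)"
  unfolding pmult_closed_def Sn_eq
  using pmult_perm_partitions permutes_compose perm_partition_Istar permutes_imp_bij by fastforce

lemma pmult_closed_non_units: "pmult_closed n (Istar n - Sn n)"
  unfolding pmult_closed_def using pmult_Istar pmult_Sn_left by blast

lemma pmult_closed_perm_partition_id:
  assumes X: "pmult_closed n X" and \<pi>: "\<pi> permutes {1..n}" and "perm_partition n \<pi> \<in> X"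
  shows "perm_partition n id \<in> X"
proof -
  have powers: "perm_partition n (\<pi> ^^ Suc m) \<in> X" for m
  proof (induction m)
    case 0
    with assms(3) show ?case by simp
  next
    case (Suc m)
    have "pmult n (perm_partition n \<pi>) (perm_partition n (\<pi> ^^ Suc m)) =
        perm_partition n (\<pi> ^^ Suc (Suc m))"
      unfolding funpow_Suc_right[of "Suc m"]
      by (rule pmult_perm_partitions[OF \<pi> permutes_funpow[OF \<pi>]])
    with X assms(3) Suc.IH show ?case unfolding pmult_closed_def by metis
  qed
  obtain k where "\<pi> ^^ k = id" "k > 0"
    using permutation_is_nilpotent permutes_imp_permutation[OF _ \<pi>] by blast
  with powers[of "k - 1"] show ?thesis by simp
qed

definition one_block :: "nat \<Rightarrow> (nat \<times> nat) set set" where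
  "one_block n = {Pts n}"

lemma one_block_Istar:
  assumes "n \<ge> 1"
  shows "one_block n \<in> Istar n"
proof -
  have "(1, 0) \<in> Pts n" "(1, 1) \<in> Pts n" using assms by simp_all
  moreover from this have "partition_on (Pts n) {Pts n}" by (intro partition_on_space) blast
  ultimately show ?thesis unfolding Istar_def one_block_def by blast
qed

lemma one_block_not_Sn:
  assumes "n \<ge> 2"
  shows "one_block n \<notin> Sn n"
proof
  assume "one_block n \<in> Sn n"
  then have "top_injective {Pts n}" unfolding one_block_def by (rule Sn_top_injective)
  moreover have "(1, 0) \<in> Pts n" "(2, 0) \<in> Pts n" using assms by simp_all
  ultimately have "(1::nat) = 2" unfolding top_injective_def by blast
  then show False by simp
qed

definition top_point :: "(nat \<times> nat) set \<Rightarrow> nat" where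
  "top_point A = (SOME i. (i, 0) \<in> A)"

lemma top_point:
  assumes "P \<in> Istar n" "A \<in> P"
  shows "(top_point A, 0) \<in> A" "(top_point A, 0) \<in> Pts n"
proof -
  obtain i where "(i, 0) \<in> A" using Istar_block_meets_level[OF assms, of 0] by blast
  then show "(top_point A, 0) \<in> A" unfolding top_point_def by (rule someI)
  with Istar_block_subset[OF assms] show "(top_point A, 0) \<in> Pts n" by blast
qed

lemma pmult_class_top_point:
  assumes a: "a \<in> Istar n" and A: "A \<in> a" "(i, 0) \<in> A"
  shows "pmult_equiv n a b `` {(top_point A, 0)} = pmult_equiv n a b `` {(i, 0)}"
proof -
  have "((top_point A, 0), (i, 0)) \<in> blockrel a"
    using A top_point[OF a A(1)] unfolding blockrel_def by blast
  then have "((top_point A, 0), (i, 0)) \<in> glue a b" by (rule glue_left)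
  moreover have "(i, 0) \<in> Pts n" using A Istar_block_subset[OF a] by blast
  ultimately have "((top_point A, 0), (i, 0)) \<in> pmult_equiv n a b"
    using top_point[OF a A(1)] unfolding pmult_equiv_def by simp
  then show ?thesis by (rule equiv_class_eq[OF equiv_pmult_equiv])
qed

lemma pmult_eq_image_top_classes:
  assumes a: "a \<in> Istar n" and b: "b \<in> Istar n"
  shows "pmult n a b = (\<lambda>A. pmult_equiv n a b `` {(top_point A, 0)}) ` a"
proof
  let ?R = "pmult_equiv n a b"
  show "(\<lambda>A. ?R `` {(top_point A, 0)}) ` a \<subseteq> pmult n a b"
  proof (rule image_subsetI)
    fix A assume "A \<in> a"
    show "?R `` {(top_point A, 0)} \<in> pmult n a b"
      unfolding pmult_eq_quotient by (rule quotientI[OF top_point(2)[OF a \<open>A \<in> a\<close>]])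
  qed
  show "pmult n a b \<subseteq> (\<lambda>A. ?R `` {(top_point A, 0)}) ` a"
  proof
    fix C assume C: "C \<in> pmult n a b"
    obtain j where j: "(j, 0) \<in> C"
      using Istar_block_meets_level[OF pmult_Istar[OF a b] C, of 0] by auto
    from C obtain x where x: "x \<in> Pts n" "C = ?R `` {x}"
      unfolding pmult_eq_quotient by (rule quotientE)
    with j have "(x, (j, 0)) \<in> ?R" by simp
    then have C_eq: "C = ?R `` {(j, 0)}"
      unfolding x(2) by (rule equiv_class_eq[OF equiv_pmult_equiv])
    have "(j, 0) \<in> Pts n" using j C Istar_block_subset[OF pmult_Istar[OF a b]] by blast
    then have A: "block_of a (j, 0) \<in> a" "(j, 0) \<in> block_of a (j, 0)"
      using block_of[OF Istar_partition[OF a]] by simp_all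
    have "C = ?R `` {(top_point (block_of a (j, 0)), 0)}"
      unfolding C_eq pmult_class_top_point[OF a A] ..
    then show "C \<in> (\<lambda>A. ?R `` {(top_point A, 0)}) ` a" using A(1) by (rule image_eqI)
  qed
qed

lemma card_pmult_less:
  assumes a: "a \<in> Istar n" and b: "b \<in> Istar n"
    and A: "A\<^sub>1 \<in> a" "A\<^sub>2 \<in> a" "A\<^sub>1 \<noteq> A\<^sub>2" "(k, 1) \<in> A\<^sub>1" "(l, 1) \<in> A\<^sub>2"
    and kl: "((k, 0), (l, 0)) \<in> blockrel b"
  shows "card (pmult n a b) < card a"
proof -
  define h where "h A = pmult_equiv n a b `` {(top_point A, 0)}" for A
  have "((top_point A\<^sub>1, 0), (k, 1)) \<in> glue a b" "((l, 1), (top_point A\<^sub>2, 0)) \<in> glue a b"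
    using A top_point(1)[OF a] glue_left unfolding blockrel_def by blast+
  moreover have "((k, 1), (l, 1)) \<in> glue a b"
    using glue_right[OF kl] by simp
  ultimately have "((top_point A\<^sub>1, 0), (top_point A\<^sub>2, 0)) \<in> glue a b"
    by (meson glue_trans)
  then have "((top_point A\<^sub>1, 0), (top_point A\<^sub>2, 0)) \<in> pmult_equiv n a b"
    using top_point(2)[OF a] A unfolding pmult_equiv_def by simp
  then have "h A\<^sub>1 = h A\<^sub>2" unfolding h_def by (rule equiv_class_eq[OF equiv_pmult_equiv])
  then have "\<not> inj_on h a" using A by (auto dest: inj_onD)
  then have "card (h ` a) \<noteq> card a"
    using inj_on_iff_eq_card[OF finite_Istar[OF a]] by blast
  then have "card (h ` a) < card a"
    using card_image_le[OF finite_Istar[OF a], of h] by linarith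
  then show ?thesis using pmult_eq_image_top_classes[OF a b] unfolding h_def by simp
qed

lemma card_pmult_conjugate_less:
  assumes x: "x \<in> Istar n" and B: "B \<in> x" "(p, 0) \<in> B" "(q, 0) \<in> B" "p \<noteq> q"
    and A: "A \<in> x" "A \<noteq> B"
  obtains \<pi> where "\<pi> permutes {1..n}" "card (pmult n x (pmult n (perm_partition n \<pi>) x)) < card x"
proof -
  have pq: "p \<in> {1..n}" "q \<in> {1..n}" using B Istar_block_subset[OF x B(1)] by auto
  obtain k where k: "k \<in> {1..n}" "(k, 1) \<in> A" using Istar_block_meets_level[OF x A(1), of 1] by auto
  obtain l where l: "l \<in> {1..n}" "(l, 1) \<in> B" using Istar_block_meets_level[OF x B(1), of 1] by auto
  have "k \<noteq> l" using Istar_block_unique[OF x A(1) B(1)] A(2) k l by blast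
  then obtain \<pi> where \<pi>: "\<pi> permutes {1..n}" "\<pi> k = p" "\<pi> l = q"
    using permutes_map_two_points[OF k(1) l(1) pq _ B(4)] by blast
  define b where "b = pmult n (perm_partition n \<pi>) x"
  have "b \<in> Istar n"
    unfolding b_def using pmult_Istar[OF perm_partition_Istar[OF permutes_imp_bij[OF \<pi>(1)]] x] .
  have "perm_top (inv \<pi>) ` B \<in> b"
    unfolding b_def pmult_perm_partition[OF \<pi>(1) x] map_top_def using B(1) by (rule imageI)
  moreover have "(k, 0) \<in> perm_top (inv \<pi>) ` B" "(l, 0) \<in> perm_top (inv \<pi>) ` B"
    using B(2,3) \<pi> permutes_inverses(2)[OF \<pi>(1)] by (force intro: rev_image_eqI)+
  ultimately have "((k, 0), (l, 0)) \<in> blockrel b" unfolding blockrel_def by blast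
  from card_pmult_less[OF x \<open>b \<in> Istar n\<close> A(1) B(1) A(2) k(2) l(2) this]
  show ?thesis unfolding b_def by (rule that[OF \<pi>(1)])
qed

lemma one_block_mem_if_non_unit:
  assumes X: "pmult_closed n X"
    and stable: "\<And>\<pi> x. \<pi> permutes {1..n} \<Longrightarrow> x \<in> X \<Longrightarrow> pmult n (perm_partition n \<pi>) x \<in> X"
  shows "x \<in> X \<Longrightarrow> x \<notin> Sn n \<Longrightarrow> one_block n \<in> X"
proof (induction "card x" arbitrary: x rule: less_induct)
  case less
  have x: "x \<in> Istar n" using less.prems(1) X unfolding pmult_closed_def by blast
  obtain B p q where B: "B \<in> x" "(p, 0) \<in> B" "(q, 0) \<in> B" "p \<noteq> q"
    using less.prems(2) top_injective_Sn[OF x] unfolding top_injective_def by blast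
  show ?case
  proof (cases "x = {B}")
    case True
    then have "B = Pts n" using partition_onD1[OF Istar_partition[OF x]] by simp
    with True less.prems(1) show ?thesis unfolding one_block_def by simp
  next
    case False
    then obtain A where "A \<in> x" "A \<noteq> B" using B(1) by blast
    then obtain \<pi> where \<pi>: "\<pi> permutes {1..n}"
      and less: "card (pmult n x (pmult n (perm_partition n \<pi>) x)) < card x"
      using card_pmult_conjugate_less[OF x B] by blast
    have "pmult n x (pmult n (perm_partition n \<pi>) x) \<in> X"
      using X stable[OF \<pi> less.prems(1)] less.prems(1) unfolding pmult_closed_def by blast
    moreover have "pmult n x (pmult n (perm_partition n \<pi>) x) \<notin> Sn n"
      using pmult_Sn_left[OF x] less.prems(2) by blast
    ultimately show ?thesis using less.hyps less by blast
  qed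
qed

lemma pmult_closed_split_eq_Sn:
  assumes X: "pmult_closed n X" and Y: "pmult_closed n Y"
    and disj: "X \<inter> Y = {}" and cover: "X \<union> Y = Istar n"
    and id: "perm_partition n id \<in> X" and "Y \<noteq> {}"
  shows "X = Sn n"
proof -
  have Sn_X: "perm_partition n \<pi> \<in> X" if \<pi>: "\<pi> permutes {1..n}" for \<pi>
  proof (rule ccontr)
    assume "perm_partition n \<pi> \<notin> X"
    then have "perm_partition n \<pi> \<in> Y"
      using cover perm_partition_Istar[OF permutes_imp_bij[OF \<pi>]] by blast
    with pmult_closed_perm_partition_id[OF Y \<pi>] id disj show False by blast
  qed
  have stable_X: "pmult n (perm_partition n \<pi>) x \<in> X" if "\<pi> permutes {1..n}" "x \<in> X" for \<pi> x
    using X Sn_X that unfolding pmult_closed_def by blast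
  have stable_Y: "pmult n (perm_partition n \<pi>) y \<in> Y"
    if \<pi>: "\<pi> permutes {1..n}" and y: "y \<in> Y" for \<pi> y
  proof (rule ccontr)
    have yI: "y \<in> Istar n" using y Y unfolding pmult_closed_def by blast
    have zI: "map_top (inv \<pi>) y \<in> Istar n"
      using pmult_Istar[OF perm_partition_Istar[OF permutes_imp_bij[OF \<pi>]] yI]
      unfolding pmult_perm_partition[OF \<pi> yI] .
    assume "pmult n (perm_partition n \<pi>) y \<notin> Y"
    then have "map_top (inv \<pi>) y \<in> X"
      using cover zI unfolding pmult_perm_partition[OF \<pi> yI] by blast
    then have "pmult n (perm_partition n (inv \<pi>)) (map_top (inv \<pi>) y) \<in> X"
      using stable_X permutes_inv[OF \<pi>] by blast
    also have "pmult n (perm_partition n (inv \<pi>)) (map_top (inv \<pi>) y) = y"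
      using pmult_perm_partition[OF permutes_inv[OF \<pi>] zI] map_top_inv[OF \<pi>]
      by (simp add: permutes_inv_inv[OF \<pi>])
    finally show False using y disj by blast
  qed
  obtain y where "y \<in> Y" using \<open>Y \<noteq> {}\<close> by blast
  moreover have "y \<notin> Sn n" using \<open>y \<in> Y\<close> Sn_X disj unfolding Sn_eq by blast
  ultimately have "one_block n \<in> Y" using one_block_mem_if_non_unit[OF Y stable_Y] by blast
  then have "x \<in> Sn n" if "x \<in> X" for x
    using one_block_mem_if_non_unit[OF X stable_X that] disj by blast
  with Sn_X show ?thesis unfolding Sn_eq by blast
qed

lemma perm_partition_id_Sn: "perm_partition n id \<in> Sn n"
  unfolding Sn_eq using permutes_id by blast

lemma completely_isolated_Istar: "completely_isolated_subsemigroup n (Istar n)"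
  unfolding completely_isolated_iff pmult_closed_def
  using pmult_Istar perm_partition_id_Sn Sn_Istar by blast

lemma completely_isolated_Sn: "completely_isolated_subsemigroup n (Sn n)"
  unfolding completely_isolated_iff
  using pmult_closed_Sn pmult_closed_non_units perm_partition_id_Sn by blast

lemma completely_isolated_non_units:
  assumes "n \<ge> 2"
  shows "completely_isolated_subsemigroup n (Istar n - Sn n)"
proof -
  have "Istar n - (Istar n - Sn n) = Sn n" using Sn_Istar by blast
  moreover have "one_block n \<in> Istar n - Sn n"
    using one_block_Istar one_block_not_Sn assms by simp
  ultimately show ?thesis
    unfolding completely_isolated_iff using pmult_closed_Sn pmult_closed_non_units by auto
qed

theorem mainTheorem8:
  fixes n :: nat and T :: "(nat \<times> nat) set set set"
  assumes "n \<ge> 2"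
  shows "completely_isolated_subsemigroup n T \<longleftrightarrow>
           T = Istar n \<or> T = Sn n \<or> T = Istar n - Sn n"
proof
  assume "completely_isolated_subsemigroup n T"
  then have T: "T \<noteq> {}" "pmult_closed n T" "pmult_closed n (Istar n - T)"
    unfolding completely_isolated_iff by blast+
  have T_Istar: "T \<subseteq> Istar n" using T(2) unfolding pmult_closed_def by blast
  consider "Istar n - T = {}" | "perm_partition n id \<in> T" "Istar n - T \<noteq> {}"
    | "perm_partition n id \<in> Istar n - T"
    using perm_partition_id_Sn Sn_Istar by blast
  then show "T = Istar n \<or> T = Sn n \<or> T = Istar n - Sn n"
  proof cases
    case 1
    with T_Istar show ?thesis by blast
  next
    case 2
    with pmult_closed_split_eq_Sn[OF T(2,3)] T_Istar show ?thesis by blast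
  next
    case 3
    with pmult_closed_split_eq_Sn[OF T(3,2)] T(1) T_Istar show ?thesis by blast
  qed
next
  assume "T = Istar n \<or> T = Sn n \<or> T = Istar n - Sn n"
  with completely_isolated_Istar completely_isolated_Sn completely_isolated_non_units[OF assms]
  show "completely_isolated_subsemigroup n T" by blast
qed

end
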